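(* Let $F$ and $G$ be simple graphs. Then \[\hom(F,G^\circ)=\sum_{L\subseteq E(F)}\hom(F\oslash L,G).\]
   Context: Graphs are finite, undirected, without multiple edges, possibly with loops; simple means without loops. A homomorphism $F\to G$ is a vertex map sending edges to edges and looped vertices to looped vertices (so an edge may be mapped onto a loop); $\hom(F,G)$ counts them. $G^\circ$ is obtained from $G$ by adding a loop at every vertex. For a simple graph $F$ and $L\subseteq E(F)$, $v\sim_L w$ iff $v,w$ lie in the same connected component of the graph $(V(F),L)$; $[v]_L$ denotes the class of $v$. The contraction quotient $F\oslash L$ is the graph (possibly with loops) whose vertices are the classes $[v]_L$, with an edge (or loop, if the classes coincide) between $[v]_L$ and $[w]_L$ iff there is an edge $xy\in E(F)\setminus L$ with $x\sim_L v$ and $y\sim_L w$. *)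

theory Defs
  imports Main "HOL-Library.FuncSet"
begin

text \<open>A graph (possibly with loops, no multiple edges) is a pair (V, E) of a vertex set
and a set of edges; an edge is a 2-element subset of V, a loop at v is the singleton {v}.\<close>

type_synonym 'a graph = "'a set \<times> 'a set set"

definition verts :: "'a graph \<Rightarrow> 'a set" where "verts G = fst G"
definition edges :: "'a graph \<Rightarrow> 'a set set" where "edges G = snd G"

definition graph :: "'a graph \<Rightarrow> bool" where
  "graph G \<longleftrightarrow> finite (verts G) \<and>
     (\<forall>e\<in>edges G. e \<subseteq> verts G \<and> (card e = 1 \<or> card e = 2))"

definition simple_graph :: "'a graph \<Rightarrow> bool" where
  "simple_graph G \<longleftrightarrow> graph G \<and> (\<forall>e\<in>edges G. card e = 2)"

text \<open>Homomorphisms F -> G: vertex maps (extensional on V(F)) sending every edge/loop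
of F to an edge or loop of G. An edge {x,y} with f x = f y is sent to the loop {f x}.\<close>

definition homs :: "'a graph \<Rightarrow> 'b graph \<Rightarrow> ('a \<Rightarrow> 'b) set" where
  "homs F G = {f \<in> verts F \<rightarrow>\<^sub>E verts G. \<forall>e\<in>edges F. f ` e \<in> edges G}"

definition hom_count :: "'a graph \<Rightarrow> 'b graph \<Rightarrow> nat" where
  "hom_count F G = card (homs F G)"

definition add_loops :: "'a graph \<Rightarrow> 'a graph" where
  "add_loops G = (verts G, edges G \<union> {{v} | v. v \<in> verts G})"

definition class_of :: "'a graph \<Rightarrow> 'a set set \<Rightarrow> 'a \<Rightarrow> 'a set" where
  "class_of F L v = {w \<in> verts F. (\<lambda>x y. {x, y} \<in> L)\<^sup>*\<^sup>* v w}"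

definition contract :: "'a graph \<Rightarrow> 'a set set \<Rightarrow> 'a set graph" where
  "contract F L = (class_of F L ` verts F,
     {{class_of F L x, class_of F L y} | x y. {x, y} \<in> edges F - L})"

end

theory Submission
  imports Defs
begin

text \<open>Sort the homomorphisms \<open>f : F \<rightarrow> G\<^sup>\<circ>\<close> by the set \<open>L\<close> of edges they collapse onto a loop.
  Such an \<open>f\<close> is constant on the \<open>L\<close>-classes and sends the remaining edges to edges of \<open>G\<close>, so
  it factors uniquely as \<open>g \<circ> [\<cdot>]\<^sub>L\<close> with \<open>g : F \<oslash> L \<rightarrow> G\<close>. Conversely, as \<open>G\<close> is loopless,
  every such \<open>g\<close> lifts to a homomorphism collapsing exactly \<open>L\<close>.\<close>

definition collapsed_edges :: "'a graph \<Rightarrow> ('a \<Rightarrow> 'b) \<Rightarrow> 'a set set" where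
  "collapsed_edges F f = {e \<in> edges F. card (f ` e) = 1}"

lemma verts_add_loops [simp]: "verts (add_loops G) = verts G"
  and edges_add_loops [simp]: "edges (add_loops G) = edges G \<union> {{v} | v. v \<in> verts G}"
  unfolding add_loops_def verts_def edges_def by simp_all

lemma verts_contract [simp]: "verts (contract F L) = class_of F L ` verts F"
  and edges_contract [simp]:
    "edges (contract F L) = {{class_of F L x, class_of F L y} | x y. {x, y} \<in> edges F - L}"
  unfolding contract_def verts_def edges_def by simp_all

lemma simple_graph_edgeE:
  assumes "simple_graph F" "e \<in> edges F"
  obtains x y where "e = {x, y}" "x \<noteq> y" "x \<in> verts F" "y \<in> verts F"
proof -
  have "card e = 2" "e \<subseteq> verts F"
    using assms unfolding simple_graph_def graph_def by auto
  then show ?thesis using that by (auto simp: card_2_iff)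
qed

lemma finite_edges: "graph F \<Longrightarrow> finite (edges F)"
  unfolding graph_def by (meson Pow_iff finite_Pow_iff finite_subset subsetI)

lemma finite_homs:
  assumes "finite (verts F)" "finite (verts G)"
  shows "finite (homs F G)"
proof (rule finite_subset)
  show "homs F G \<subseteq> verts F \<rightarrow>\<^sub>E verts G" unfolding homs_def by auto
  show "finite (verts F \<rightarrow>\<^sub>E verts G)" using assms by (rule finite_PiE)
qed

lemma class_of_self: "v \<in> verts F \<Longrightarrow> v \<in> class_of F L v"
  unfolding class_of_def by simp

lemma class_of_eq_if_edge:
  assumes "{x, y} \<in> L"
  shows "class_of F L x = class_of F L y"
proof -
  let ?R = "\<lambda>x y. {x, y} \<in> L"
  have "?R x y" "?R y x" using assms by (simp_all add: insert_commute)
  then have "?R\<^sup>*\<^sup>* x w \<longleftrightarrow> ?R\<^sup>*\<^sup>* y w" for w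
    by (meson converse_rtranclp_into_rtranclp)
  then show ?thesis unfolding class_of_def by simp
qed

lemma constant_on_class_of:
  assumes "\<And>x y. {x, y} \<in> L \<Longrightarrow> f x = f y" and "w \<in> class_of F L v"
  shows "f w = f v"
proof -
  have "(\<lambda>x y. {x, y} \<in> L)\<^sup>*\<^sup>* v w" using assms(2) unfolding class_of_def by simp
  then have "f v = f w"
    by (induction rule: rtranclp_induct) (auto dest: assms(1))
  then show ?thesis by simp
qed

lemma card_homs_eq_sum_collapsed:
  assumes "finite (edges F)" "finite (homs F H)"
  shows "card (homs F H) = (\<Sum>L\<in>Pow (edges F). card {f \<in> homs F H. collapsed_edges F f = L})"
proof -
  have "collapsed_edges F ` homs F H \<subseteq> Pow (edges F)"
    unfolding collapsed_edges_def by auto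
  then show ?thesis
    using sum.group[of "homs F H" "Pow (edges F)" "collapsed_edges F" "\<lambda>_. 1 :: nat"] assms
    by simp
qed

context
  fixes F :: "'a graph" and L :: "'a set set"
begin

definition lift_along_class_of :: "('a set \<Rightarrow> 'b) \<Rightarrow> 'a \<Rightarrow> 'b" where
  "lift_along_class_of g = restrict (g \<circ> class_of F L) (verts F)"

lemma inj_on_lift_along_class_of: "inj_on lift_along_class_of (homs (contract F L) G)"
proof (rule inj_onI)
  fix g1 g2
  assume g: "g1 \<in> homs (contract F L) G" "g2 \<in> homs (contract F L) G"
    and eq: "lift_along_class_of g1 = lift_along_class_of g2"
  have "g1 (class_of F L v) = g2 (class_of F L v)" if "v \<in> verts F" for v
    using fun_cong[OF eq, of v] that unfolding lift_along_class_of_def by simp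
  moreover have "g1 \<in> extensional (class_of F L ` verts F)" "g2 \<in> extensional (class_of F L ` verts F)"
    using g unfolding homs_def by (auto simp: PiE_iff)
  ultimately show "g1 = g2" by (auto intro: extensionalityI)
qed

lemma lift_along_class_of_collapses:
  assumes F: "simple_graph F" and G: "simple_graph G" and L: "L \<subseteq> edges F"
    and g: "g \<in> homs (contract F L) G"
  shows "lift_along_class_of g \<in> homs F (add_loops G)"
    and "collapsed_edges F (lift_along_class_of g) = L"
proof -
  let ?f = "lift_along_class_of g"
  have gV: "g \<in> class_of F L ` verts F \<rightarrow>\<^sub>E verts G"
    and gE: "\<And>e. e \<in> edges (contract F L) \<Longrightarrow> g ` e \<in> edges G"
    using g unfolding homs_def by auto
  have edge: "?f ` e \<in> edges (add_loops G) \<and> (card (?f ` e) = 1 \<longleftrightarrow> e \<in> L)"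
    if e: "e \<in> edges F" for e
  proof -
    obtain x y where xy: "e = {x, y}" "x \<noteq> y" "x \<in> verts F" "y \<in> verts F"
      using simple_graph_edgeE[OF F e] .
    have fe: "?f ` e = {g (class_of F L x), g (class_of F L y)}"
      using xy unfolding lift_along_class_of_def by auto
    show ?thesis
    proof (cases "e \<in> L")
      case True
      then have "class_of F L x = class_of F L y" using class_of_eq_if_edge xy(1) by metis
      moreover have "g (class_of F L x) \<in> verts G" using gV xy(3) by auto
      ultimately show ?thesis using fe True by auto
    next
      case False
      then have "g ` {class_of F L x, class_of F L y} \<in> edges G"
        using e xy(1) by (intro gE) auto
      moreover from this have "g (class_of F L x) \<noteq> g (class_of F L y)"
        using G unfolding simple_graph_def by (cases "g (class_of F L x) = g (class_of F L y)") auto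
      ultimately show ?thesis using fe False by auto
    qed
  qed
  have "?f \<in> verts F \<rightarrow>\<^sub>E verts G"
    using gV unfolding lift_along_class_of_def by auto
  then show "?f \<in> homs F (add_loops G)" using edge unfolding homs_def by auto
  show "collapsed_edges F ?f = L" using edge L unfolding collapsed_edges_def by auto
qed

lemma collapsing_hom_factors:
  assumes F: "simple_graph F"
    and f: "f \<in> homs F (add_loops G)" and L: "collapsed_edges F f = L"
  shows "\<exists>g \<in> homs (contract F L) G. lift_along_class_of g = f"
proof -
  have fV: "f \<in> verts F \<rightarrow>\<^sub>E verts G" and fE: "\<And>e. e \<in> edges F \<Longrightarrow> f ` e \<in> edges (add_loops G)"
    using f unfolding homs_def by auto
  have "f x = f y" if "{x, y} \<in> L" for x y
    using that L unfolding collapsed_edges_def by (cases "f x = f y") auto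
  then have f_class: "f w = f v" if "w \<in> class_of F L v" for v w
    using that by (rule constant_on_class_of)
  define g where "g = restrict (\<lambda>C. f (SOME v. v \<in> C)) (class_of F L ` verts F)"
  have g_class: "g (class_of F L v) = f v" if "v \<in> verts F" for v
    using f_class someI[of "\<lambda>w. w \<in> class_of F L v", OF class_of_self[OF that]] that
    unfolding g_def by simp
  have "g \<in> class_of F L ` verts F \<rightarrow>\<^sub>E verts G"
    using g_class fV unfolding g_def by auto
  moreover have "g ` e \<in> edges G" if e: "e \<in> edges (contract F L)" for e
  proof -
    obtain x y where xy: "e = {class_of F L x, class_of F L y}" "{x, y} \<in> edges F - L"
      using e by auto
    have "x \<in> verts F" "y \<in> verts F"
      using F xy(2) unfolding simple_graph_def graph_def by auto
    then have "g ` e = f ` {x, y}" using xy(1) g_class by auto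
    moreover have "card (f ` {x, y}) \<noteq> 1" using xy(2) L unfolding collapsed_edges_def by auto
    moreover have "f ` {x, y} \<in> edges (add_loops G)" using xy(2) by (intro fE) auto
    ultimately show ?thesis by auto
  qed
  ultimately have "g \<in> homs (contract F L) G" unfolding homs_def by auto
  moreover have "lift_along_class_of g = f"
  proof
    fix v
    show "lift_along_class_of g v = f v"
      using g_class fV unfolding lift_along_class_of_def
      by (cases "v \<in> verts F") (auto simp: PiE_def extensional_def)
  qed
  ultimately show ?thesis by blast
qed

lemma card_homs_contract:
  assumes "simple_graph F" "simple_graph G" "L \<subseteq> edges F"
  shows "card (homs (contract F L) G) = card {f \<in> homs F (add_loops G). collapsed_edges F f = L}"
proof (rule bij_betw_same_card[OF bij_betw_imageI])
  show "inj_on lift_along_class_of (homs (contract F L) G)"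
    by (rule inj_on_lift_along_class_of)
  show "lift_along_class_of ` homs (contract F L) G
      = {f \<in> homs F (add_loops G). collapsed_edges F f = L}"
  proof (intro equalityI subsetI)
    fix f assume "f \<in> lift_along_class_of ` homs (contract F L) G"
    then show "f \<in> {f \<in> homs F (add_loops G). collapsed_edges F f = L}"
      using lift_along_class_of_collapses[OF assms] by auto
  next
    fix f assume "f \<in> {f \<in> homs F (add_loops G). collapsed_edges F f = L}"
    then obtain g where "g \<in> homs (contract F L) G" "lift_along_class_of g = f"
      using collapsing_hom_factors[OF assms(1)] by blast
    then show "f \<in> lift_along_class_of ` homs (contract F L) G" by blast
  qed
qed

end

theorem theorem10:
  fixes F :: "'a graph" and G :: "'b graph"
  assumes "simple_graph F" and "simple_graph G"
  shows "hom_count F (add_loops G) = (\<Sum>L\<in>Pow (edges F). hom_count (contract F L) G)"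
proof -
  have "graph F" "graph G" using assms unfolding simple_graph_def by auto
  then have "finite (edges F)" "finite (homs F (add_loops G))"
    by (auto simp: finite_edges graph_def intro: finite_homs)
  then have "hom_count F (add_loops G)
      = (\<Sum>L\<in>Pow (edges F). card {f \<in> homs F (add_loops G). collapsed_edges F f = L})"
    unfolding hom_count_def by (rule card_homs_eq_sum_collapsed)
  also have "\<dots> = (\<Sum>L\<in>Pow (edges F). hom_count (contract F L) G)"
    unfolding hom_count_def using card_homs_contract[OF assms] by (intro sum.cong) auto
  finally show ?thesis .
qed

end
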